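(* Every compact $\ell_1$-convex subset of $\mathbb{R}^n$ is Jordan measurable.
   Context: A subset $Z\subseteq\mathbb{R}^n$ is $\ell_1$-convex if for all $z,z'\in Z$, with $D=\sum_i|z_i-z'_i|$, there is $\gamma\colon[0,D]\to Z$ with $\gamma(0)=z,\gamma(D)=z'$ and $\sum_i|\gamma_i(t)-\gamma_i(t')|=|t-t'|$ for all $t,t'$. *)

theory Defs
  imports "HOL-Analysis.Analysis"
begin

definition l1_dist :: "real^'n \<Rightarrow> real^'n \<Rightarrow> real" where
  "l1_dist z z' = (\<Sum>i\<in>UNIV. \<bar>z $ i - z' $ i\<bar>)"

definition l1_convex :: "(real^'n) set \<Rightarrow> bool" where
  "l1_convex Z \<longleftrightarrow>
     (\<forall>z\<in>Z. \<forall>z'\<in>Z. \<exists>\<gamma> :: real \<Rightarrow> real^'n.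
        \<gamma> ` {0..l1_dist z z'} \<subseteq> Z \<and> \<gamma> 0 = z \<and> \<gamma> (l1_dist z z') = z' \<and>
        (\<forall>t\<in>{0..l1_dist z z'}. \<forall>t'\<in>{0..l1_dist z z'}.
            l1_dist (\<gamma> t) (\<gamma> t') = \<bar>t - t'\<bar>))"

definition jordan_measurable :: "'a::euclidean_space set \<Rightarrow> bool" where
  "jordan_measurable S \<longleftrightarrow> bounded S \<and> negligible (frontier S)"

end

theory Submission
  imports Defs
begin

text \<open>If a point \<open>x\<close> of \<open>Z\<close> sees points of \<open>Z\<close> in all \<open>2^n\<close> open orthants around it, then
  \<open>\<ell>\<^sub>1\<close>-convexity fills a whole cube around \<open>x\<close>: an \<open>\<ell>\<^sub>1\<close>-geodesic stays coordinatewise between its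
  endpoints, so the intermediate value theorem along geodesics lets us prescribe the coordinates
  one at a time. Hence every boundary point of \<open>Z\<close> is, for some sign pattern \<open>\<sigma>\<close>, not strictly
  dominated within \<open>Z\<close> in the orthant order of \<open>\<sigma>\<close>. The set of such points is disjoint from all its
  translates along the diagonal direction of the orthant, and a bounded measurable set with that
  property has measure zero, since arbitrarily many disjoint translates fit into a bounded region.\<close>

lemma abs_component_le_l1_dist: "\<bar>a $ i - b $ i\<bar> \<le> l1_dist a b"
  unfolding l1_dist_def by (rule member_le_sum) auto

lemma l1_dist_nonneg: "0 \<le> l1_dist a b"
  unfolding l1_dist_def by (rule sum_nonneg) simp

lemma l1_dist_additive_imp_between:
  assumes "l1_dist z y + l1_dist y z' = l1_dist z z'"
  shows "min (z$i) (z'$i) \<le> y$i \<and> y$i \<le> max (z$i) (z'$i)"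
proof -
  let ?excess = "\<lambda>k. \<bar>z$k - y$k\<bar> + \<bar>y$k - z'$k\<bar> - \<bar>z$k - z'$k\<bar>"
  have "sum ?excess UNIV = 0"
    using assms unfolding l1_dist_def sum.distrib sum_subtractf by simp
  moreover have "\<forall>k\<in>UNIV. 0 \<le> ?excess k" by auto
  ultimately have "?excess i = 0"
    by (subst (asm) sum_nonneg_eq_0_iff) auto
  then show ?thesis by arith
qed

lemma l1_geodesic_between:
  assumes "\<gamma> 0 = z" and "\<gamma> (l1_dist z z') = z'"
    and iso: "\<forall>t\<in>{0..l1_dist z z'}. \<forall>t'\<in>{0..l1_dist z z'}. l1_dist (\<gamma> t) (\<gamma> t') = \<bar>t - t'\<bar>"
    and t: "t \<in> {0..l1_dist z z'}"
  shows "min (z$i) (z'$i) \<le> \<gamma> t $ i \<and> \<gamma> t $ i \<le> max (z$i) (z'$i)"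
proof (rule l1_dist_additive_imp_between)
  have "l1_dist z (\<gamma> t) = t" and "l1_dist (\<gamma> t) z' = l1_dist z z' - t"
    using iso[rule_format, of 0 t] iso[rule_format, of t "l1_dist z z'"] t assms(1,2) by auto
  then show "l1_dist z (\<gamma> t) + l1_dist (\<gamma> t) z' = l1_dist z z'" by simp
qed

lemma continuous_on_l1_isometry_component:
  assumes iso: "\<forall>t\<in>S. \<forall>t'\<in>S. l1_dist (\<gamma> t) (\<gamma> t') = \<bar>t - t'\<bar>"
  shows "continuous_on S (\<lambda>t. \<gamma> t $ j)"
  unfolding continuous_on_iff
proof (intro ballI allI impI exI conjI)
  fix t e t' assume "t \<in> S" "(0::real) < e" "t' \<in> S" "dist t' t < e"
  then show "dist (\<gamma> t' $ j) (\<gamma> t $ j) < e"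
    using abs_component_le_l1_dist[of "\<gamma> t'" j "\<gamma> t"] iso by (auto simp: dist_real_def)
qed

lemma l1_convex_intermediate_point:
  assumes "l1_convex Z" and "y1 \<in> Z" and "y2 \<in> Z" and "y2 $ j \<le> c" and "c \<le> y1 $ j"
  obtains y where "y \<in> Z" and "y $ j = c"
    and "\<And>i. min (y1$i) (y2$i) \<le> y$i \<and> y$i \<le> max (y1$i) (y2$i)"
proof -
  define D where "D = l1_dist y1 y2"
  obtain \<gamma> where \<gamma>: "\<gamma> ` {0..D} \<subseteq> Z" "\<gamma> 0 = y1" "\<gamma> D = y2"
      "\<forall>t\<in>{0..D}. \<forall>t'\<in>{0..D}. l1_dist (\<gamma> t) (\<gamma> t') = \<bar>t - t'\<bar>"
    using assms(1-3) unfolding l1_convex_def D_def by blast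
  have "\<exists>t. 0 \<le> t \<and> t \<le> D \<and> \<gamma> t $ j = c"
    using assms(4,5) \<gamma>(2,3) l1_dist_nonneg[of y1 y2]
    by (intro IVT2' continuous_on_l1_isometry_component[OF \<gamma>(4)]) (auto simp: D_def)
  then obtain t where t: "t \<in> {0..D}" "\<gamma> t $ j = c" by auto
  show thesis
  proof
    show "\<gamma> t \<in> Z" using \<gamma>(1) t(1) by auto
    show "min (y1$i) (y2$i) \<le> \<gamma> t $ i \<and> \<gamma> t $ i \<le> max (y1$i) (y2$i)" for i
      using \<gamma> t(1) by (intro l1_geodesic_between) (auto simp: D_def)
  qed (fact t(2))
qed

definition orthant_beyond :: "('n \<Rightarrow> bool) \<Rightarrow> real \<Rightarrow> real^'n \<Rightarrow> real^'n \<Rightarrow> bool" where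
  "orthant_beyond \<sigma> e x y \<longleftrightarrow> (\<forall>i. if \<sigma> i then x$i + e \<le> y$i else y$i \<le> x$i - e)"

text \<open>The new coordinate \<open>j\<close> is hit on a geodesic between a point beyond \<open>x\<close> in direction \<open>+e\<^sub>j\<close> and
  one in direction \<open>-e\<^sub>j\<close>, both obtained from the induction hypothesis; the geodesic keeps all
  other free coordinates on the side of \<open>x\<close> prescribed by \<open>\<sigma>\<close>.\<close>

lemma l1_convex_prescribe_coordinates:
  assumes lc: "l1_convex Z"
    and beyond: "\<And>\<sigma>. \<exists>y\<in>Z. orthant_beyond \<sigma> e x y"
    and "finite J" and "\<forall>i\<in>J. \<bar>q$i - x$i\<bar> \<le> e"
  shows "\<exists>y\<in>Z. (\<forall>i\<in>J. y$i = q$i) \<and> (\<forall>i. i \<notin> J \<longrightarrow> (if \<sigma> i then x$i + e \<le> y$i else y$i \<le> x$i - e))"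
  using assms(3,4)
proof (induction J arbitrary: \<sigma> rule: finite_induct)
  case empty
  then show ?case using beyond unfolding orthant_beyond_def by auto
next
  case (insert j J)
  obtain y1 where y1: "y1 \<in> Z" "\<forall>i\<in>J. y1$i = q$i"
      "\<forall>i. i \<notin> J \<longrightarrow> (if (\<sigma>(j:=True)) i then x$i + e \<le> y1$i else y1$i \<le> x$i - e)"
    using insert.IH insert.prems by blast
  obtain y2 where y2: "y2 \<in> Z" "\<forall>i\<in>J. y2$i = q$i"
      "\<forall>i. i \<notin> J \<longrightarrow> (if (\<sigma>(j:=False)) i then x$i + e \<le> y2$i else y2$i \<le> x$i - e)"
    using insert.IH insert.prems by blast
  have "y2 $ j \<le> q $ j" "q $ j \<le> y1 $ j"
    using y1(3)[rule_format, of j] y2(3)[rule_format, of j] insert.hyps(2) insert.prems by auto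
  then obtain y where y: "y \<in> Z" "y $ j = q $ j"
      and between: "\<And>i. min (y1$i) (y2$i) \<le> y$i \<and> y$i \<le> max (y1$i) (y2$i)"
    using l1_convex_intermediate_point[OF lc y1(1) y2(1)] by blast
  show ?case
  proof (intro bexI[OF _ y(1)] conjI allI impI ballI)
    show "y $ i = q $ i" if "i \<in> insert j J" for i
      using that y(2) between[of i] y1(2) y2(2) by auto
    show "if \<sigma> i then x$i + e \<le> y$i else y$i \<le> x$i - e" if "i \<notin> insert j J" for i
      using that y1(3)[rule_format, of i] y2(3)[rule_format, of i] between[of i]
      by (auto split: if_splits)
  qed
qed

lemma l1_convex_cube_subset:
  assumes "l1_convex Z" and "\<And>\<sigma>. \<exists>y\<in>Z. orthant_beyond \<sigma> e x y"
  shows "{q. \<forall>i. \<bar>q$i - x$i\<bar> \<le> e} \<subseteq> Z"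
proof
  fix q assume "q \<in> {q. \<forall>i. \<bar>q$i - x$i\<bar> \<le> e}"
  then obtain y where "y \<in> Z" "\<forall>i. y$i = q$i"
    using l1_convex_prescribe_coordinates[OF assms, of UNIV q] by auto
  then show "q \<in> Z" by (metis vec_eq_iff)
qed

definition orthant_maximal :: "(real^'n) set \<Rightarrow> ('n \<Rightarrow> bool) \<Rightarrow> (real^'n) set" where
  "orthant_maximal Z \<sigma> = {x\<in>Z. \<not> (\<exists>y\<in>Z. \<forall>i. if \<sigma> i then x$i < y$i else y$i < x$i)}"

lemma frontier_subset_orthant_maximal:
  assumes "closed Z" and "l1_convex Z"
  shows "frontier Z \<subseteq> (\<Union>\<sigma>. orthant_maximal Z \<sigma>)"
proof
  fix x assume x: "x \<in> frontier Z"
  with assms(1) have "x \<in> Z" using frontier_subset_closed by blast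
  show "x \<in> (\<Union>\<sigma>. orthant_maximal Z \<sigma>)"
  proof (rule ccontr)
    assume "x \<notin> (\<Union>\<sigma>. orthant_maximal Z \<sigma>)"
    with \<open>x \<in> Z\<close> obtain p where p: "\<And>\<sigma>. p \<sigma> \<in> Z"
        "\<And>\<sigma> i. if \<sigma> i then x$i < p \<sigma> $ i else p \<sigma> $ i < x$i"
      unfolding orthant_maximal_def by simp metis
    define e where "e = Min ((\<lambda>(\<sigma>, i). \<bar>p \<sigma> $ i - x $ i\<bar>) ` UNIV)"
    have "\<bar>p \<sigma> $ i - x $ i\<bar> > 0" for \<sigma> i
      using p(2)[of \<sigma> i] by (auto split: if_splits)
    then have "e > 0"
      unfolding e_def by (subst Min_gr_iff) auto
    have "e \<le> \<bar>p \<sigma> $ i - x $ i\<bar>" for \<sigma> i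
      unfolding e_def by (intro Min_le) auto
    then have "orthant_beyond \<sigma> e x (p \<sigma>)" for \<sigma>
      using p(2)[of \<sigma>] unfolding orthant_beyond_def by (smt (verit))
    with p(1) have "{q. \<forall>i. \<bar>q$i - x$i\<bar> \<le> e} \<subseteq> Z"
      by (intro l1_convex_cube_subset[OF assms(2)]) blast
    moreover have "ball x e \<subseteq> {q. \<forall>i. \<bar>q$i - x$i\<bar> \<le> e}"
    proof clarsimp
      fix q i assume "dist x q < e"
      then show "\<bar>q$i - x$i\<bar> \<le> e"
        using component_le_norm_cart[of "q - x" i] by (simp add: dist_norm norm_minus_commute)
    qed
    ultimately have "x \<in> interior Z"
      using \<open>e > 0\<close> by (meson centre_in_ball interior_maximal open_ball subset_trans subsetD)
    with x show False by (simp add: frontier_def)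
  qed
qed

lemma closed_orthant_maximal:
  fixes Z :: "(real^'n) set"
  assumes "closed Z"
  shows "closed (orthant_maximal Z \<sigma>)"
proof -
  let ?dominates = "\<lambda>y i. {x. if \<sigma> i then x$i < y$i else y$i < x$i}"
  have "orthant_maximal Z \<sigma> = Z - (\<Union>y\<in>Z. \<Inter>i. ?dominates y i)"
    unfolding orthant_maximal_def by blast
  moreover have "open (?dominates y i)" for y :: "real^'n" and i
    using open_halfspace_component_lt_cart open_halfspace_component_gt_cart by (cases "\<sigma> i") auto
  ultimately show ?thesis
    using assms by (simp add: closed_Diff open_UN open_INT)
qed

lemma orthant_maximal_disjoint_diagonal_translate:
  assumes "t > 0"
  shows "orthant_maximal Z \<sigma> \<inter> (+) (t *\<^sub>R (\<chi> i. if \<sigma> i then 1 else -1)) ` orthant_maximal Z \<sigma> = {}"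
  using assms unfolding orthant_maximal_def by (fastforce split: if_splits)

lemma negligible_if_disjoint_from_translates:
  fixes A :: "'a::euclidean_space set"
  assumes "A \<in> lmeasurable" and "bounded A"
    and disjoint: "\<And>t. t > 0 \<Longrightarrow> A \<inter> (+) (t *\<^sub>R v) ` A = {}"
  shows "negligible A"
proof -
  obtain r where r: "\<And>a. a \<in> A \<Longrightarrow> norm a \<le> r" using assms(2) by (auto simp: bounded_iff)
  define m where "m = measure lebesgue A"
  define M where "M = measure lebesgue (cball (0::'a) (r + norm v))"
  have bound: "real N * m \<le> M" for N
  proof (cases "N = 0")
    case False
    define T where "T k = (+) ((real k / real N) *\<^sub>R v) ` A" for k
    have T_measurable: "T k \<in> lmeasurable" for k
      unfolding T_def by (rule measurable_translation[OF assms(1)])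
    have "T k \<inter> T l = {}" if "k < l" for k l
    proof -
      have "(real l - real k) / real N > 0" using that False by simp
      then have "A \<inter> (+) (((real l - real k) / real N) *\<^sub>R v) ` A = {}" by (rule disjoint)
      then show ?thesis
        unfolding T_def by (auto simp: algebra_simps diff_divide_distrib)
    qed
    then have T_disjoint: "disjoint_family_on T {..<N}"
      unfolding disjoint_family_on_def by (metis Int_commute linorder_neqE_nat)
    have "measure lebesgue (\<Union>k<N. T k) = (\<Sum>k<N. measure lebesgue (T k))"
      by (rule measure_finite_Union[OF _ _ T_disjoint])
        (use T_measurable fmeasurableD2[OF T_measurable] in auto)
    also have "\<dots> = real N * m" unfolding T_def m_def measure_translation by simp
    finally have "measure lebesgue (\<Union>k<N. T k) = real N * m" .
    moreover have "(\<Union>k<N. T k) \<subseteq> cball 0 (r + norm v)"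
    proof
      fix y assume "y \<in> (\<Union>k<N. T k)"
      then obtain k a where "k < N" "a \<in> A" and y: "y = (real k / real N) *\<^sub>R v + a"
        unfolding T_def by auto
      then have "real k / real N \<le> 1" and "norm a \<le> r" using r by auto
      then have "norm ((real k / real N) *\<^sub>R v) \<le> norm v"
        using mult_left_le_one_le[of "norm v" "real k / real N"] by auto
      with \<open>norm a \<le> r\<close> show "y \<in> cball 0 (r + norm v)"
        unfolding y by (auto intro: norm_triangle_le)
    qed
    then have "measure lebesgue (\<Union>k<N. T k) \<le> M"
      unfolding M_def using T_measurable
      by (intro measure_mono_fmeasurable) (auto simp: fmeasurableD)
    ultimately show ?thesis by simp
  qed (simp add: M_def)
  have "m = 0"
  proof (rule ccontr)
    assume "m \<noteq> 0"
    then have "m > 0" using measure_nonneg[of lebesgue A] unfolding m_def by linarith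
    obtain N :: nat where "N > M / m" using reals_Archimedean2 by blast
    with \<open>m > 0\<close> bound[of N] show False by (simp add: field_simps)
  qed
  then show ?thesis using negligible_iff_measure0[OF assms(1)] unfolding m_def by simp
qed

lemma negligible_orthant_maximal:
  assumes "compact Z"
  shows "negligible (orthant_maximal Z \<sigma>)"
proof (rule negligible_if_disjoint_from_translates)
  have "compact (Z \<inter> orthant_maximal Z \<sigma>)"
    using assms by (intro compact_Int_closed closed_orthant_maximal compact_imp_closed)
  moreover have "Z \<inter> orthant_maximal Z \<sigma> = orthant_maximal Z \<sigma>"
    by (auto simp: orthant_maximal_def)
  ultimately show "orthant_maximal Z \<sigma> \<in> lmeasurable" and "bounded (orthant_maximal Z \<sigma>)"
    by (auto intro: lmeasurable_compact compact_imp_bounded)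
qed (rule orthant_maximal_disjoint_diagonal_translate)

theorem proposition3p4:
  fixes Z :: "(real^'n) set"
  assumes "compact Z" and "l1_convex Z"
  shows "jordan_measurable Z"
  unfolding jordan_measurable_def
proof
  show "bounded Z" using assms(1) by (rule compact_imp_bounded)
  have "negligible (\<Union>\<sigma>. orthant_maximal Z \<sigma>)"
    using assms(1) by (intro negligible_Union) (auto intro: negligible_orthant_maximal)
  moreover have "frontier Z \<subseteq> (\<Union>\<sigma>. orthant_maximal Z \<sigma>)"
    using assms by (intro frontier_subset_orthant_maximal compact_imp_closed)
  ultimately show "negligible (frontier Z)" by (rule negligible_subset)
qed

end
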